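(* Let $n_x,n_y,n_z$ be pairwise relatively prime positive integers. Every knot in $\mathcal{L}(n_x,n_y,n_z)$ can be represented (up to mirror image) as a Lissajous knot with frequencies $(n_x,n_y,n_z)$, with $\phi_x=0$, and with phase shift pair $(\phi_y,\phi_z)\in[0,\frac{\pi}{n_x}]\times[0,\pi]$.
   Context: A Lissajous knot is a knot in $\mathbb{R}^3$ admitting a parameterization $K(t)=(\cos(n_xt+\phi_x),\cos(n_yt+\phi_y),\cos(n_zt+\phi_z))$, $0\le t\le 2\pi$, where the frequencies $n_x,n_y,n_z$ are integers and the phase shifts $\phi_x,\phi_y,\phi_z$ are real numbers (chosen so that the curve is embedded). $\mathcal{L}(n_x,n_y,n_z)$ denotes the set of knot types of all Lissajous knots with frequencies $n_x,n_y,n_z$, where a knot and its mirror image are considered equivalent. *)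

theory Defs
  imports "HOL-Analysis.Analysis"
begin

type_synonym R3 = "real \<times> real \<times> real"

definition lissajous :: "nat \<Rightarrow> nat \<Rightarrow> nat \<Rightarrow> real \<Rightarrow> real \<Rightarrow> real \<Rightarrow> real \<Rightarrow> R3" where
  "lissajous nx ny nz px py pz t =
     (cos (real nx * t + px), cos (real ny * t + py), cos (real nz * t + pz))"

definition is_lissajous_knot :: "nat \<Rightarrow> nat \<Rightarrow> nat \<Rightarrow> real \<Rightarrow> real \<Rightarrow> real \<Rightarrow> bool" where
  "is_lissajous_knot nx ny nz px py pz \<longleftrightarrow>
     inj_on (lissajous nx ny nz px py pz) {0..<2*pi}"

definition lissajous_image :: "nat \<Rightarrow> nat \<Rightarrow> nat \<Rightarrow> real \<Rightarrow> real \<Rightarrow> real \<Rightarrow> R3 set" where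
  "lissajous_image nx ny nz px py pz = lissajous nx ny nz px py pz ` {0..2*pi}"

definition ambient_isotopic :: "R3 set \<Rightarrow> R3 set \<Rightarrow> bool" where
  "ambient_isotopic K1 K2 \<longleftrightarrow>
     (\<exists>H :: R3 \<times> real \<Rightarrow> R3.
        continuous_on (UNIV \<times> {0..1}) H \<and>
        (\<forall>t\<in>{0..1}. \<exists>g. homeomorphism UNIV UNIV (\<lambda>x. H (x, t)) g) \<and>
        (\<forall>x. H (x, 0) = x) \<and>
        (\<lambda>x. H (x, 1)) ` K1 = K2)"

definition mirror :: "R3 \<Rightarrow> R3" where
  "mirror p = (fst p, fst (snd p), - snd (snd p))"

definition knot_equiv_mirror :: "R3 set \<Rightarrow> R3 set \<Rightarrow> bool" where
  "knot_equiv_mirror K1 K2 \<longleftrightarrow> ambient_isotopic K1 K2 \<or> ambient_isotopic K1 (mirror ` K2)"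

end

theory Submission imports Defs begin

text \<open>
  Shifting the parameter by c changes each phase by n c, and changing a phase by a multiple
  of pi only flips the sign of the coordinate. Choosing c = (k pi - px) / nx kills px up to
  the sign; since nx and ny are coprime, the integer k can be chosen by Bezout so that the
  remaining freedom moves py in steps of pi / nx, bringing it into [0, pi / nx]; finally pz is
  reduced modulo pi. A sign change of two coordinates is a rotation by pi, hence ambient
  isotopic to the identity, and a sign change of one coordinate is a mirror image.
\<close>

lemma exists_int_shift_into_period:
  fixes p x :: real
  assumes "p > 0"
  obtains k :: int where "x - of_int k * p \<in> {0..<p}"
proof
  show "x - of_int \<lfloor>x / p\<rfloor> * p \<in> {0..<p}"
    using floor_divide_lower[OF assms, of x] floor_divide_upper[OF assms, of x]
    by (simp add: algebra_simps)
qed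

lemma periodic_eq_imp_congruent:
  fixes L :: "real \<Rightarrow> 'a" and p :: real
  assumes "p > 0" and periodic: "\<And>t k. L (t + of_int k * p) = L t"
    and inj: "inj_on L {0..<p}" and eq: "L s = L t"
  obtains k :: int where "s = t + of_int k * p"
proof -
  obtain a :: int where a: "s - of_int a * p \<in> {0..<p}"
    using exists_int_shift_into_period[OF \<open>p > 0\<close>] .
  obtain b :: int where b: "t - of_int b * p \<in> {0..<p}"
    using exists_int_shift_into_period[OF \<open>p > 0\<close>] .
  have "L (s - of_int a * p) = L (t - of_int b * p)"
    using periodic[of s "- a"] periodic[of t "- b"] eq by simp
  with inj a b have "s - of_int a * p = t - of_int b * p"
    by (auto dest: inj_onD)
  then have "s = t + of_int (a - b) * p"
    by (simp add: algebra_simps)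
  then show ?thesis ..
qed

lemma congruent_in_period_imp_eq:
  fixes p s t :: real
  assumes "s \<in> {0..<p}" "t \<in> {0..<p}" and "s = t + of_int k * p"
  shows "s = t"
proof -
  have "p > 0"
    using assms(1) by simp
  from assms have "of_int k * p < 1 * p" and "- 1 * p < of_int k * p"
    by (simp_all only: atLeastLessThan_iff) linarith+
  then have "of_int k < (1::real)" and "- 1 < (of_int k :: real)"
    using mult_less_cancel_right_pos[OF \<open>p > 0\<close>] by blast+
  then have "k = 0"
    by linarith
  then show ?thesis
    using assms(3) by simp
qed

lemma inj_on_period_reparametrize:
  fixes L :: "real \<Rightarrow> 'a" and L' :: "real \<Rightarrow> 'b" and D :: "'a \<Rightarrow> 'b"
  assumes "p > 0" and periodic: "\<And>t k. L (t + of_int k * p) = L t"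
    and rel: "\<And>t. L' t = D (L (t + c))" and "inj D" and "inj_on L {0..<p}"
  shows "inj_on L' {0..<p}"
proof (rule inj_onI)
  fix s t assume s: "s \<in> {0..<p}" and t: "t \<in> {0..<p}" and "L' s = L' t"
  then have "L (s + c) = L (t + c)"
    using rel \<open>inj D\<close> by (simp add: inj_eq)
  then obtain k :: int where "s + c = t + c + of_int k * p"
    using periodic_eq_imp_congruent[OF \<open>p > 0\<close> periodic \<open>inj_on L {0..<p}\<close>] by blast
  then have "s = t + of_int k * p"
    by simp
  then show "s = t"
    by (rule congruent_in_period_imp_eq[OF s t])
qed

lemma image_period_eq_range:
  fixes L :: "real \<Rightarrow> 'a"
  assumes "p > 0" and periodic: "\<And>t k. L (t + of_int k * p) = L t"
  shows "L ` {0..p} = range L"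
proof
  show "range L \<subseteq> L ` {0..p}"
  proof
    fix y assume "y \<in> range L"
    then obtain t where y: "y = L t" by auto
    obtain k :: int where "t - of_int k * p \<in> {0..<p}"
      using exists_int_shift_into_period[OF \<open>p > 0\<close>] .
    moreover have "y = L (t - of_int k * p)"
      using periodic[of t "- k"] y by simp
    ultimately show "y \<in> L ` {0..p}" by auto
  qed
qed auto

lemma image_period_reparametrize:
  fixes L :: "real \<Rightarrow> 'a" and L' :: "real \<Rightarrow> 'b" and D :: "'a \<Rightarrow> 'b"
  assumes "p > 0" and periodic: "\<And>t k. L (t + of_int k * p) = L t"
    and periodic': "\<And>t k. L' (t + of_int k * p) = L' t"
    and rel: "\<And>t. L' t = D (L (t + c))"
  shows "L' ` {0..p} = D ` L ` {0..p}"
proof -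
  have "range L' = D ` range L"
  proof
    show "range L' \<subseteq> D ` range L"
      using rel by auto
    show "D ` range L \<subseteq> range L'"
    proof
      fix y assume "y \<in> D ` range L"
      then obtain t where "y = D (L t)" by auto
      then have "y = L' (t - c)"
        using rel[of "t - c"] by simp
      then show "y \<in> range L'" by simp
    qed
  qed
  then show ?thesis
    unfolding image_period_eq_range[OF \<open>p > 0\<close> periodic] image_period_eq_range[OF \<open>p > 0\<close> periodic'] .
qed

definition scale_coords :: "real \<Rightarrow> real \<Rightarrow> real \<Rightarrow> R3 \<Rightarrow> R3" where
  "scale_coords a b c p = (a * fst p, b * fst (snd p), c * snd (snd p))"

lemma inj_scale_coords:
  assumes "a \<noteq> 0" "b \<noteq> 0" "c \<noteq> 0"
  shows "inj (scale_coords a b c)"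
  using assms by (auto simp: inj_def scale_coords_def prod_eq_iff)

lemma mirror_image_scale_coords: "mirror ` scale_coords a b c ` K = scale_coords a b (- c) ` K"
  by (auto simp: image_image mirror_def scale_coords_def)

lemma ambient_isotopic_by_flow:
  fixes H :: "R3 \<times> real \<Rightarrow> R3"
  assumes "continuous_on UNIV H" and "\<And>x. H (x, 0) = x" and "\<And>x. H (x, 1) = D x"
    and inverse: "\<And>x s. H (H (x, s), - s) = x"
  shows "ambient_isotopic K (D ` K)"
  unfolding ambient_isotopic_def
proof (intro exI[of _ H] conjI ballI allI)
  show "continuous_on (UNIV \<times> {0..1}) H"
    using assms(1) by (rule continuous_on_subset) auto
  show "H (x, 0) = x" for x by fact
  show "(\<lambda>x. H (x, 1)) ` K = D ` K"
    using assms(3) by simp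
  have continuous_slice: "continuous_on UNIV (\<lambda>x. H (x, s))" for s
    by (rule continuous_on_compose2[OF assms(1)]) (auto intro: continuous_intros)
  fix t :: real
  show "\<exists>g. homeomorphism UNIV UNIV (\<lambda>x. H (x, t)) g"
    using inverse[of _ t] inverse[of _ "- t"]
    by (intro exI[of _ "\<lambda>x. H (x, - t)"] homeomorphismI continuous_slice) auto
qed

lemma rotation_inverse:
  fixes x y a :: real
  shows "(x * cos a - y * sin a) * cos a + (x * sin a + y * cos a) * sin a = x"
    and "(x * sin a + y * cos a) * cos a - (x * cos a - y * sin a) * sin a = y"
proof -
  have "(x * cos a - y * sin a) * cos a + (x * sin a + y * cos a) * sin a
          = x * ((sin a)\<^sup>2 + (cos a)\<^sup>2)"
    and "(x * sin a + y * cos a) * cos a - (x * cos a - y * sin a) * sin a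
          = y * ((sin a)\<^sup>2 + (cos a)\<^sup>2)"
    by algebra+
  then show "(x * cos a - y * sin a) * cos a + (x * sin a + y * cos a) * sin a = x"
    and "(x * sin a + y * cos a) * cos a - (x * cos a - y * sin a) * sin a = y"
    by simp_all
qed

lemma ambient_isotopic_negate_xy: "ambient_isotopic K (scale_coords (- 1) (- 1) 1 ` K)"
  by (rule ambient_isotopic_by_flow[where H = "\<lambda>((x, y, z), s).
        (x * cos (pi * s) - y * sin (pi * s), x * sin (pi * s) + y * cos (pi * s), z)"])
     (auto simp: scale_coords_def rotation_inverse case_prod_beta intro!: continuous_intros)

lemma ambient_isotopic_negate_xz: "ambient_isotopic K (scale_coords (- 1) 1 (- 1) ` K)"
  by (rule ambient_isotopic_by_flow[where H = "\<lambda>((x, y, z), s).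
        (x * cos (pi * s) - z * sin (pi * s), y, x * sin (pi * s) + z * cos (pi * s))"])
     (auto simp: scale_coords_def rotation_inverse case_prod_beta intro!: continuous_intros)

lemma ambient_isotopic_negate_yz: "ambient_isotopic K (scale_coords 1 (- 1) (- 1) ` K)"
  by (rule ambient_isotopic_by_flow[where H = "\<lambda>((x, y, z), s).
        (x, y * cos (pi * s) - z * sin (pi * s), y * sin (pi * s) + z * cos (pi * s))"])
     (auto simp: scale_coords_def rotation_inverse case_prod_beta intro!: continuous_intros)

lemma ambient_isotopic_refl: "ambient_isotopic K K"
  by (rule ambient_isotopic_by_flow[of fst, where D = id, simplified])
     (auto intro: continuous_intros)

lemma ambient_isotopic_sign_change:
  assumes "a \<in> {1, - 1}" "b \<in> {1, - 1}" "c \<in> {1, - 1}" "a * b * c = 1"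
  shows "ambient_isotopic K (scale_coords a b c ` K)"
proof -
  have "scale_coords 1 1 1 = id"
    by (auto simp: scale_coords_def)
  then show ?thesis
    using assms ambient_isotopic_negate_xy ambient_isotopic_negate_xz ambient_isotopic_negate_yz
      ambient_isotopic_refl by auto
qed

lemma knot_equiv_mirror_sign_change:
  assumes "a \<in> {1, - 1}" "b \<in> {1, - 1}" "c \<in> {1, - 1}"
  shows "knot_equiv_mirror K (scale_coords a b c ` K)"
proof (cases "a * b * c = 1")
  case True
  then show ?thesis
    using ambient_isotopic_sign_change assms unfolding knot_equiv_mirror_def by blast
next
  case False
  then have "a * b * (- c) = 1"
    using assms by auto
  then have "ambient_isotopic K (scale_coords a b (- c) ` K)"
    using ambient_isotopic_sign_change assms by auto
  then show ?thesis
    unfolding knot_equiv_mirror_def mirror_image_scale_coords by blast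
qed

lemma lissajous_periodic:
  "lissajous nx ny nz px py pz (t + of_int k * (2 * pi)) = lissajous nx ny nz px py pz t"
proof -
  have "cos (real n * (t + of_int k * (2 * pi)) + p) = cos (real n * t + p)" for n :: nat and p
  proof -
    have "real n * (t + of_int k * (2 * pi)) + p = (real n * t + p) + 2 * pi * of_int (int n * k)"
      by (simp add: algebra_simps)
    then show ?thesis
      by (metis sin_cos_eq_iff)
  qed
  then show ?thesis
    by (simp add: lissajous_def)
qed

lemma cos_add_int_pi: "cos (x + pi * of_int k) = cos (pi * of_int k) * cos x"
  by (simp add: cos_add sin_times_pi_eq_0 mult.commute)

lemma lissajous_phase_change:
  assumes "real nx * c + px = px' + pi * of_int kx"
    and "real ny * c + py = py' + pi * of_int ky"
    and "real nz * c + pz = pz' + pi * of_int kz"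
  shows "lissajous nx ny nz px' py' pz' t
           = scale_coords (cos (pi * of_int kx)) (cos (pi * of_int ky)) (cos (pi * of_int kz))
               (lissajous nx ny nz px py pz (t + c))"
proof -
  have "cos (real n * t + p') = cos (pi * of_int k) * cos (real n * (t + c) + p)"
    if "real n * c + p = p' + pi * of_int k" for n :: nat and p p' k
  proof -
    have "real n * (t + c) + p = (real n * t + p') + pi * of_int k"
      using that by (simp add: algebra_simps)
    then show ?thesis
      by (simp add: cos_add_int_pi)
  qed
  then show ?thesis
    using assms by (simp add: lissajous_def scale_coords_def)
qed

lemma lissajous_knot_phase_change:
  assumes "real nx * c + px = px' + pi * of_int kx"
    and "real ny * c + py = py' + pi * of_int ky"
    and "real nz * c + pz = pz' + pi * of_int kz"
    and "is_lissajous_knot nx ny nz px py pz"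
  shows "is_lissajous_knot nx ny nz px' py' pz'"
    and "knot_equiv_mirror (lissajous_image nx ny nz px py pz) (lissajous_image nx ny nz px' py' pz')"
proof -
  let ?D = "scale_coords (cos (pi * of_int kx)) (cos (pi * of_int ky)) (cos (pi * of_int kz))"
  have signs: "cos (pi * of_int k) \<in> {1, - 1}" for k
    by simp
  note rel = lissajous_phase_change[OF assms(1-3)]
  have "inj ?D"
    by (intro inj_scale_coords) simp_all
  then show "is_lissajous_knot nx ny nz px' py' pz'"
    using inj_on_period_reparametrize[where p = "2 * pi" and L = "lissajous nx ny nz px py pz"
        and L' = "lissajous nx ny nz px' py' pz'" and D = ?D, OF _ lissajous_periodic rel]
      assms(4)
    unfolding is_lissajous_knot_def by simp
  have "lissajous_image nx ny nz px' py' pz' = ?D ` lissajous_image nx ny nz px py pz"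
    using image_period_reparametrize[where p = "2 * pi" and L = "lissajous nx ny nz px py pz"
        and L' = "lissajous nx ny nz px' py' pz'" and D = ?D, OF _ lissajous_periodic
        lissajous_periodic rel]
    unfolding lissajous_image_def by simp
  then show "knot_equiv_mirror (lissajous_image nx ny nz px py pz) (lissajous_image nx ny nz px' py' pz')"
    using knot_equiv_mirror_sign_change[OF signs signs signs] by simp
qed

lemma bezout_phase_identity:
  fixes nx ny :: nat and u v j :: int and px py :: real
  assumes "nx > 0" and "u * int ny + v * int nx = 1"
  shows "real ny * ((pi * of_int (- j * u) - px) / real nx) + py
           = (py - real ny * px / real nx - of_int j * (pi / real nx)) + pi * of_int (j * v)"
proof -
  have "real ny * ((pi * of_int (- j * u) - px) / real nx) + py
          = py - real ny * px / real nx - pi * of_int j * (real ny * of_int u) / real nx"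
    using assms(1) by (simp add: field_simps)
  also have "real ny * of_int u = 1 - real nx * of_int v"
    using arg_cong[OF assms(2), of real_of_int] by (simp add: mult.commute)
  finally show ?thesis
    using assms(1) by (simp add: field_simps)
qed

theorem theorem3:
  fixes nx ny nz :: nat and px py pz :: real
  assumes "nx > 0" "ny > 0" "nz > 0"
    and "coprime nx ny" "coprime nx nz" "coprime ny nz"
    and "is_lissajous_knot nx ny nz px py pz"
  shows "\<exists>qy qz. qy \<in> {0..pi / real nx} \<and> qz \<in> {0..pi} \<and>
           is_lissajous_knot nx ny nz 0 qy qz \<and>
           knot_equiv_mirror (lissajous_image nx ny nz px py pz)
                             (lissajous_image nx ny nz 0 qy qz)"
proof -
  obtain u v :: int where bezout: "u * int ny + v * int nx = 1"
    using bezout_int[of "int ny" "int nx"] \<open>coprime nx ny\<close>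
    by (auto simp: coprime_iff_gcd_eq_1 gcd.commute)
  define a where "a = py - real ny * px / real nx"
  obtain j :: int where qy: "a - of_int j * (pi / real nx) \<in> {0..<pi / real nx}"
    using exists_int_shift_into_period[of "pi / real nx"] \<open>nx > 0\<close> by auto
  define c where "c = (pi * of_int (- j * u) - px) / real nx"
  obtain l :: int where qz: "real nz * c + pz - of_int l * pi \<in> {0..<pi}"
    using exists_int_shift_into_period[of pi] by auto
  have px_shift: "real nx * c + px = 0 + pi * of_int (- j * u)"
    using \<open>nx > 0\<close> unfolding c_def by simp
  have py_shift: "real ny * c + py = (a - of_int j * (pi / real nx)) + pi * of_int (j * v)"
    unfolding a_def c_def using bezout_phase_identity[OF \<open>nx > 0\<close> bezout] .
  have pz_shift: "real nz * c + pz = (real nz * c + pz - of_int l * pi) + pi * of_int l"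
    by simp
  note phase_change = lissajous_knot_phase_change[OF px_shift py_shift pz_shift
      \<open>is_lissajous_knot nx ny nz px py pz\<close>]
  show ?thesis
    using phase_change qy qz by (meson atLeastLessThan_iff atLeastAtMost_iff less_imp_le)
qed

end
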